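(* Let $m\ge1$, $C>0$, $\mathbf{y}\in\{-1,1\}^m$, let $\mathbf{Q}\in\mathbb{R}^{m\times m}$ be a symmetric positive semidefinite kernel matrix on the labeled nodes, let $\mathcal{T}$ be a finite set of test nodes with kernel values $Q_{ti}$ ($t\in\mathcal{T}$, $i\in[m]$). Let $\boldsymbol\alpha^*\in\mathcal{S}(\mathbf{y})$, $\hat p_t=\sum_{i=1}^m y_i\alpha_i^*Q_{ti}$ and assume $\hat p_t\ne0$ for all $t\in\mathcal{T}$. Set $M_{u_i}=\sum_{j}C|Q_{ij}|-1$, $M_{v_i}=\sum_jC|Q_{ij}|+1$ for $i\in[m]$, and $l_t=-C\sum_{i=1}^m|Q_{ti}|$, $h_t=C\sum_{i=1}^m|Q_{ti}|$ for $t\in\mathcal{T}$. Consider the MILP $$P_C(\mathbf{y}):\ \max\ \sum_{t\in\mathcal{T}}c_t$$ over the variables and subject to all constraints of the sample-wise MILP $P(\mathbf{y})$ (namely $\boldsymbol{\alpha},\tilde{\mathbf{y}},\mathbf{z},\mathbf{u},\mathbf{v}\in\mathbb{R}^m$, $\mathbf{y}',\mathbf{s},\mathbf{t}\in\{0,1\}^m$, $\mathbf{R}\in\mathbb{R}^{m\times m}$ with $\sum_i(1-y_i\tilde y_i)\le2\lfloor\epsilon m\rfloor$ and, for all $i,j\in[m]$: $\tilde y_i=2y_i'-1$; $\sum_jR_{ij}Q_{ij}-1-u_i+v_i=0$; $u_i,v_i\ge0$; $-C(1+\tilde y_i)\le R_{ij}+z_j\le C(1+\tilde y_i)$; $-C(1-\tilde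 y_i)\le R_{ij}-z_j\le C(1-\tilde y_i)$; $-\alpha_i\le z_i\le\alpha_i$; $\alpha_i-C(1-\tilde y_i)\le z_i\le C(1+\tilde y_i)-\alpha_i$; $u_i\le M_{u_i}s_i$; $\alpha_i\le C(1-s_i)$; $v_i\le M_{v_i}t_i$; $\alpha_i\ge Ct_i$), together with additional variables $c_t\in\{0,1\}$ and $p_t\in\mathbb{R}$ for $t\in\mathcal{T}$ and constraints: $p_t=\sum_{i=1}^m z_iQ_{ti}$ for all $t\in\mathcal{T}$; for all $t$ with $\hat p_t>0$: $p_t\le h_t(1-c_t)$ and $p_t\ge l_tc_t$; for all $t$ with $\hat p_t<0$: $p_t\ge l_t(1-c_t)$ and $p_t\le h_tc_t$. Then the optimal value of $P_C(\mathbf{y})$ equals the maximum number of test nodes that are simultaneously certifiably non-robust, i.e. $\max\big\{|\{t\in\mathcal{T}:\operatorname{sign}(\hat p_t)\sum_{i=1}^m\tilde y_i\alpha_iQ_{ti}\le 0\}| : \tilde{\mathbf{y}}\in\mathcal{A}(\mathbf{y}),\ \boldsymbol\alpha\in\mathcal{S}(\tilde{\mathbf{y}})\big\}$.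
   Context: Binary classification with $m$ labeled nodes. For $\tilde{\mathbf{y}}\in\{-1,1\}^m$, the bias-free kernel SVM dual is $D(\tilde{\mathbf{y}}):\ \min_{\boldsymbol\alpha}-\sum_i\alpha_i+\tfrac12\sum_{i,j}\tilde y_i\tilde y_j\alpha_i\alpha_jQ_{ij}$ s.t. $0\le\alpha_i\le C$ for all $i\in[m]$; $\mathcal{S}(\tilde{\mathbf{y}})$ is its set of optimal solutions; the prediction score of node $t$ is $p_t=\sum_i\tilde y_i\alpha_iQ_{ti}$ and the predicted class is its sign. The adversary with budget $\epsilon\in[0,1]$ chooses one $\tilde{\mathbf{y}}\in\mathcal{A}(\mathbf{y})=\{\tilde{\mathbf{y}}\in\{-1,1\}^m:\|\tilde{\mathbf{y}}-\mathbf{y}\|_0\le\lfloor\epsilon m\rfloor\}$ used for all test nodes simultaneously. A test node $t$ counts as non-robust under $(\tilde{\mathbf{y}},\boldsymbol\alpha)$ if $\operatorname{sign}(\hat p_t)p_t\le0$. *)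

theory Defs
  imports Complex_Main
begin

(* Labeled nodes are indexed by {..<m}; vectors are functions nat => real
   (values outside {..<m} are irrelevant).
   Q i j = Q_{ij} for labeled nodes, Qt t i = Q_{ti}. *)

definition label_vec :: "nat \<Rightarrow> (nat \<Rightarrow> real) \<Rightarrow> bool" where
  "label_vec m y \<longleftrightarrow> (\<forall>i<m. y i = -1 \<or> y i = 1)"

definition psd :: "nat \<Rightarrow> (nat \<Rightarrow> nat \<Rightarrow> real) \<Rightarrow> bool" where
  "psd m Q \<longleftrightarrow> (\<forall>x::nat \<Rightarrow> real. 0 \<le> (\<Sum>i<m. \<Sum>j<m. x i * x j * Q i j))"

definition sym_mat :: "nat \<Rightarrow> (nat \<Rightarrow> nat \<Rightarrow> real) \<Rightarrow> bool" where
  "sym_mat m Q \<longleftrightarrow> (\<forall>i<m. \<forall>j<m. Q i j = Q j i)"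

text \<open>Objective of the bias-free kernel SVM dual D(yt).\<close>
definition dual_obj :: "nat \<Rightarrow> (nat \<Rightarrow> nat \<Rightarrow> real) \<Rightarrow> (nat \<Rightarrow> real) \<Rightarrow> (nat \<Rightarrow> real) \<Rightarrow> real" where
  "dual_obj m Q yt \<alpha> = - (\<Sum>i<m. \<alpha> i) + (1/2) * (\<Sum>i<m. \<Sum>j<m. yt i * yt j * \<alpha> i * \<alpha> j * Q i j)"

definition dual_feasible :: "nat \<Rightarrow> real \<Rightarrow> (nat \<Rightarrow> real) \<Rightarrow> bool" where
  "dual_feasible m C \<alpha> \<longleftrightarrow> (\<forall>i<m. 0 \<le> \<alpha> i \<and> \<alpha> i \<le> C)"

definition svm_opt :: "nat \<Rightarrow> real \<Rightarrow> (nat \<Rightarrow> nat \<Rightarrow> real) \<Rightarrow> (nat \<Rightarrow> real) \<Rightarrow> (nat \<Rightarrow> real) set" where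
  "svm_opt m C Q yt = {\<alpha>. dual_feasible m C \<alpha> \<and>
      (\<forall>\<beta>. dual_feasible m C \<beta> \<longrightarrow> dual_obj m Q yt \<alpha> \<le> dual_obj m Q yt \<beta>)}"

definition adv_set :: "nat \<Rightarrow> real \<Rightarrow> (nat \<Rightarrow> real) \<Rightarrow> (nat \<Rightarrow> real) set" where
  "adv_set m \<epsilon> y = {yt. label_vec m yt \<and> card {i\<in>{..<m}. yt i \<noteq> y i} \<le> nat \<lfloor>\<epsilon> * real m\<rfloor>}"

definition pred_score :: "nat \<Rightarrow> ('a \<Rightarrow> nat \<Rightarrow> real) \<Rightarrow> (nat \<Rightarrow> real) \<Rightarrow> (nat \<Rightarrow> real) \<Rightarrow> 'a \<Rightarrow> real" where
  "pred_score m Qt yt \<alpha> t = (\<Sum>i<m. yt i * \<alpha> i * Qt t i)"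

definition num_nonrobust :: "nat \<Rightarrow> ('a \<Rightarrow> nat \<Rightarrow> real) \<Rightarrow> 'a set \<Rightarrow> ('a \<Rightarrow> real) \<Rightarrow> (nat \<Rightarrow> real) \<Rightarrow> (nat \<Rightarrow> real) \<Rightarrow> nat" where
  "num_nonrobust m Qt T phat yt \<alpha> = card {t\<in>T. sgn (phat t) * pred_score m Qt yt \<alpha> t \<le> 0}"

text \<open>Feasibility for the MILP P_C(y): all constraints of P(y) plus c, p constraints.
  Variables: alpha, yt, z, u, v, y', s, tv (the vector t of the paper), R, c, p.\<close>
definition PC_feasible ::
  "nat \<Rightarrow> real \<Rightarrow> real \<Rightarrow> (nat \<Rightarrow> nat \<Rightarrow> real) \<Rightarrow> ('a \<Rightarrow> nat \<Rightarrow> real) \<Rightarrow> 'a set \<Rightarrow>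
   (nat \<Rightarrow> real) \<Rightarrow> ('a \<Rightarrow> real) \<Rightarrow>
   (nat \<Rightarrow> real) \<Rightarrow> (nat \<Rightarrow> real) \<Rightarrow> (nat \<Rightarrow> real) \<Rightarrow> (nat \<Rightarrow> real) \<Rightarrow> (nat \<Rightarrow> real) \<Rightarrow>
   (nat \<Rightarrow> real) \<Rightarrow> (nat \<Rightarrow> real) \<Rightarrow> (nat \<Rightarrow> real) \<Rightarrow> (nat \<Rightarrow> nat \<Rightarrow> real) \<Rightarrow>
   ('a \<Rightarrow> real) \<Rightarrow> ('a \<Rightarrow> real) \<Rightarrow> bool" where
  "PC_feasible m C \<epsilon> Q Qt T y phat \<alpha> yt z u v y' s tv R c p \<longleftrightarrow>
    (let Mu = (\<lambda>i. (\<Sum>j<m. C * \<bar>Q i j\<bar>) - 1);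
         Mv = (\<lambda>i. (\<Sum>j<m. C * \<bar>Q i j\<bar>) + 1);
         l = (\<lambda>t. - C * (\<Sum>i<m. \<bar>Qt t i\<bar>));
         h = (\<lambda>t. C * (\<Sum>i<m. \<bar>Qt t i\<bar>))
     in (\<Sum>i<m. 1 - y i * yt i) \<le> 2 * of_int \<lfloor>\<epsilon> * real m\<rfloor>
      \<and> (\<forall>i<m. y' i \<in> {0,1} \<and> s i \<in> {0,1} \<and> tv i \<in> {0,1})
      \<and> (\<forall>i<m. yt i = 2 * y' i - 1)
      \<and> (\<forall>i<m. (\<Sum>j<m. R i j * Q i j) - 1 - u i + v i = 0)
      \<and> (\<forall>i<m. 0 \<le> u i \<and> 0 \<le> v i)
      \<and> (\<forall>i<m. \<forall>j<m. - C * (1 + yt i) \<le> R i j + z j \<and> R i j + z j \<le> C * (1 + yt i))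
      \<and> (\<forall>i<m. \<forall>j<m. - C * (1 - yt i) \<le> R i j - z j \<and> R i j - z j \<le> C * (1 - yt i))
      \<and> (\<forall>i<m. - \<alpha> i \<le> z i \<and> z i \<le> \<alpha> i)
      \<and> (\<forall>i<m. \<alpha> i - C * (1 - yt i) \<le> z i \<and> z i \<le> C * (1 + yt i) - \<alpha> i)
      \<and> (\<forall>i<m. u i \<le> Mu i * s i \<and> \<alpha> i \<le> C * (1 - s i))
      \<and> (\<forall>i<m. v i \<le> Mv i * tv i \<and> C * tv i \<le> \<alpha> i)
      \<and> (\<forall>t\<in>T. c t \<in> {0,1})
      \<and> (\<forall>t\<in>T. p t = (\<Sum>i<m. z i * Qt t i))
      \<and> (\<forall>t\<in>T. phat t > 0 \<longrightarrow> p t \<le> h t * (1 - c t) \<and> p t \<ge> l t * c t)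
      \<and> (\<forall>t\<in>T. phat t < 0 \<longrightarrow> p t \<ge> l t * (1 - c t) \<and> p t \<le> h t * c t))"

definition PC_values ::
  "nat \<Rightarrow> real \<Rightarrow> real \<Rightarrow> (nat \<Rightarrow> nat \<Rightarrow> real) \<Rightarrow> ('a \<Rightarrow> nat \<Rightarrow> real) \<Rightarrow> 'a set \<Rightarrow>
   (nat \<Rightarrow> real) \<Rightarrow> ('a \<Rightarrow> real) \<Rightarrow> real set" where
  "PC_values m C \<epsilon> Q Qt T y phat =
     {(\<Sum>t\<in>T. c t) | \<alpha> yt z u v y' s tv R c p.
        PC_feasible m C \<epsilon> Q Qt T y phat \<alpha> yt z u v y' s tv R c p}"

definition is_opt_value :: "real set \<Rightarrow> real \<Rightarrow> bool" where
  "is_opt_value V x \<longleftrightarrow> x \<in> V \<and> (\<forall>w\<in>V. w \<le> x)"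

end

theory Submission
  imports Defs
begin

text \<open>
  For positive semidefinite \<open>Q\<close> the dual \<open>D(yt)\<close> is convex, so \<open>\<alpha> \<in> S(yt)\<close> holds exactly when
  \<open>\<alpha>\<close> is box-feasible and satisfies the KKT conditions: the gradient
  \<open>g\<^sub>i = yt\<^sub>i \<Sum>\<^sub>j yt\<^sub>j \<alpha>\<^sub>j Q\<^sub>i\<^sub>j - 1\<close> is \<open>\<ge> 0\<close> where \<open>\<alpha>\<^sub>i < C\<close> and \<open>\<le> 0\<close> where \<open>\<alpha>\<^sub>i > 0\<close>.
  Each big-M block of \<open>P\<^sub>C(y)\<close> linearises one of these ingredients: for \<open>yt\<^sub>i = \<plusminus>1\<close> the
  bounds force \<open>z\<^sub>i = yt\<^sub>i \<alpha>\<^sub>i\<close> and \<open>R\<^sub>i\<^sub>j = yt\<^sub>i z\<^sub>j\<close>, so \<open>u - v\<close> is the gradient, and the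
  binaries \<open>s, t\<close> switch on the two sign conditions.  Hence a feasible point is an admissible
  \<open>yt\<close> with an optimal \<open>\<alpha>\<close>, and \<open>c\<^sub>t\<close> can be \<open>1\<close> only if test node \<open>t\<close> is non-robust under
  them; conversely every such pair, with \<open>c\<^sub>t\<close> the indicator of non-robustness, is feasible,
  the constants \<open>M\<^sub>u, M\<^sub>v, l, h\<close> being bounds on the gradient and on the scores.
\<close>

definition dual_grad ::
  "nat \<Rightarrow> (nat \<Rightarrow> nat \<Rightarrow> real) \<Rightarrow> (nat \<Rightarrow> real) \<Rightarrow> (nat \<Rightarrow> real) \<Rightarrow> nat \<Rightarrow> real" where
  "dual_grad m Q yt \<alpha> i = (\<Sum>j<m. yt i * yt j * \<alpha> j * Q i j) - 1"

definition svm_kkt ::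
  "nat \<Rightarrow> real \<Rightarrow> (nat \<Rightarrow> nat \<Rightarrow> real) \<Rightarrow> (nat \<Rightarrow> real) \<Rightarrow> (nat \<Rightarrow> real) \<Rightarrow> bool" where
  "svm_kkt m C Q yt \<alpha> \<longleftrightarrow>
     (\<forall>i<m. (\<alpha> i < C \<longrightarrow> 0 \<le> dual_grad m Q yt \<alpha> i) \<and> (0 < \<alpha> i \<longrightarrow> dual_grad m Q yt \<alpha> i \<le> 0))"

lemma dual_obj_expand:
  assumes "sym_mat m Q"
  shows "dual_obj m Q yt (\<lambda>i. \<alpha> i + d i)
       = dual_obj m Q yt \<alpha> + (\<Sum>i<m. d i * dual_grad m Q yt \<alpha> i)
         + 1/2 * (\<Sum>i<m. \<Sum>j<m. yt i * yt j * d i * d j * Q i j)"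
proof -
  have cross: "(\<Sum>i<m. \<Sum>j<m. yt i * yt j * \<alpha> i * d j * Q i j)
             = (\<Sum>i<m. \<Sum>j<m. yt i * yt j * d i * \<alpha> j * Q i j)"
    by (subst sum.swap) (use assms in \<open>auto simp: sym_mat_def algebra_simps intro!: sum.cong\<close>)
  have grad: "(\<Sum>i<m. d i * dual_grad m Q yt \<alpha> i)
            = (\<Sum>i<m. \<Sum>j<m. yt i * yt j * d i * \<alpha> j * Q i j) - (\<Sum>i<m. d i)"
    by (simp add: dual_grad_def sum_distrib_left sum_subtractf algebra_simps)
  show ?thesis
    unfolding dual_obj_def grad using cross
    by (simp add: sum.distrib algebra_simps)
qed

lemma dual_obj_update:
  assumes "sym_mat m Q" "i < m"
  shows "dual_obj m Q yt (\<alpha>(i := \<alpha> i + e))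
       = dual_obj m Q yt \<alpha> + e * dual_grad m Q yt \<alpha> i + e * e * (yt i * yt i * Q i i / 2)"
proof -
  define d where "d k = (if k = i then e else 0)" for k
  have "\<alpha>(i := \<alpha> i + e) = (\<lambda>k. \<alpha> k + d k)" by (auto simp: d_def)
  moreover have "(\<Sum>k<m. d k * dual_grad m Q yt \<alpha> k) = e * dual_grad m Q yt \<alpha> i"
    using assms(2) by (simp add: d_def if_distrib[of "\<lambda>x. x * _"] cong: if_cong)
  moreover have "(\<Sum>a<m. \<Sum>b<m. yt a * yt b * d a * d b * Q a b) = e * e * (yt i * yt i * Q i i)"
    using assms(2)
    by (simp add: d_def if_distrib[of "\<lambda>x. x * _"] if_distrib[of "\<lambda>x. _ * x"] cong: if_cong)
  ultimately show ?thesis by (simp add: dual_obj_expand[OF assms(1)])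
qed

lemma nonneg_if_quadratic_nonneg:
  fixes g k d :: real
  assumes "0 < d" and "\<And>e. 0 < e \<Longrightarrow> e \<le> d \<Longrightarrow> 0 \<le> e * g + e * e * k"
  shows "0 \<le> g"
proof (rule ccontr)
  assume "\<not> 0 \<le> g"
  define e where "e = min d (\<bar>g\<bar> / (\<bar>k\<bar> + 1))"
  have e_pos: "0 < e"
    using \<open>0 < d\<close> \<open>\<not> 0 \<le> g\<close> by (simp add: e_def divide_neg_pos abs_add_one_gt_zero)
  have "e \<le> \<bar>g\<bar> / (\<bar>k\<bar> + 1)" unfolding e_def by (rule min.cobounded2)
  then have "e * (\<bar>k\<bar> + 1) \<le> \<bar>g\<bar>" by (simp add: pos_le_divide_eq abs_add_one_gt_zero)
  moreover have "e * k \<le> e * \<bar>k\<bar>" using e_pos by (intro mult_left_mono) auto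
  ultimately have "g + e * k < 0" using e_pos \<open>\<not> 0 \<le> g\<close> unfolding distrib_left by linarith
  with e_pos have "e * (g + e * k) < 0" by (rule mult_pos_neg)
  then have "e * g + e * e * k < 0" by (simp add: algebra_simps)
  moreover have "0 \<le> e * g + e * e * k"
    using assms(2)[OF e_pos] unfolding e_def by (simp add: min.cobounded1)
  ultimately show False by simp
qed

lemma svm_opt_imp_kkt:
  assumes "sym_mat m Q" "\<alpha> \<in> svm_opt m C Q yt"
  shows "svm_kkt m C Q yt \<alpha>"
  unfolding svm_kkt_def
proof (intro allI impI conjI)
  fix i assume "i < m"
  define g where "g = dual_grad m Q yt \<alpha> i"
  define k where "k = yt i * yt i * Q i i / 2"
  have feas: "dual_feasible m C \<alpha>"
    and opt: "\<And>\<beta>. dual_feasible m C \<beta> \<Longrightarrow> dual_obj m Q yt \<alpha> \<le> dual_obj m Q yt \<beta>"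
    using assms(2) by (auto simp: svm_opt_def)
  have perturb: "0 \<le> e * g + e * e * k" if "0 \<le> \<alpha> i + e" "\<alpha> i + e \<le> C" for e
  proof -
    have "dual_feasible m C (\<alpha>(i := \<alpha> i + e))"
      using feas that by (simp add: dual_feasible_def)
    from opt[OF this] show ?thesis
      by (simp add: dual_obj_update[OF assms(1) \<open>i < m\<close>] g_def k_def)
  qed
  have bounds: "0 \<le> \<alpha> i" "\<alpha> i \<le> C" using feas \<open>i < m\<close> by (auto simp: dual_feasible_def)
  show "0 \<le> dual_grad m Q yt \<alpha> i" if "\<alpha> i < C"
  proof -
    have "0 \<le> g"
    proof (rule nonneg_if_quadratic_nonneg[of "C - \<alpha> i"])
      fix e :: real assume "0 < e" "e \<le> C - \<alpha> i"
      then show "0 \<le> e * g + e * e * k" using perturb[of e] bounds by simp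
    qed (use that in simp)
    then show ?thesis by (simp add: g_def)
  qed
  show "dual_grad m Q yt \<alpha> i \<le> 0" if "0 < \<alpha> i"
  proof -
    have "0 \<le> - g"
    proof (rule nonneg_if_quadratic_nonneg[of "\<alpha> i"])
      fix e :: real assume "0 < e" "e \<le> \<alpha> i"
      then show "0 \<le> e * - g + e * e * k" using perturb[of "- e"] bounds by simp
    qed (use that in simp)
    then show ?thesis by (simp add: g_def)
  qed
qed

lemma svm_opt_if_kkt:
  assumes "sym_mat m Q" "psd m Q" "dual_feasible m C \<alpha>" "svm_kkt m C Q yt \<alpha>"
  shows "\<alpha> \<in> svm_opt m C Q yt"
  unfolding svm_opt_def
proof (intro CollectI conjI allI impI assms(3))
  fix \<beta> assume feas_\<beta>: "dual_feasible m C \<beta>"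
  define d where "d i = \<beta> i - \<alpha> i" for i
  have "0 \<le> d i * dual_grad m Q yt \<alpha> i" if "i < m" for i
  proof (cases "dual_grad m Q yt \<alpha> i" "0::real" rule: linorder_cases)
    case less
    then have "\<alpha> i = C" "\<beta> i \<le> C"
      using that assms(3,4) feas_\<beta> by (fastforce simp: svm_kkt_def dual_feasible_def)+
    then show ?thesis using less by (simp add: d_def mult_nonpos_nonpos)
  next
    case greater
    then have "\<alpha> i = 0" "0 \<le> \<beta> i"
      using that assms(3,4) feas_\<beta> by (fastforce simp: svm_kkt_def dual_feasible_def)+
    then show ?thesis using greater by (simp add: d_def)
  qed simp
  then have linear: "0 \<le> (\<Sum>i<m. d i * dual_grad m Q yt \<alpha> i)" by (intro sum_nonneg) auto
  have "0 \<le> (\<Sum>i<m. \<Sum>j<m. (d i * yt i) * (d j * yt j) * Q i j)"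
    using assms(2)[unfolded psd_def, rule_format, of "\<lambda>i. d i * yt i"] by simp
  then have quadratic: "0 \<le> (\<Sum>i<m. \<Sum>j<m. yt i * yt j * d i * d j * Q i j)"
    by (simp add: algebra_simps)
  have "\<beta> = (\<lambda>i. \<alpha> i + d i)" by (simp add: d_def)
  then show "dual_obj m Q yt \<alpha> \<le> dual_obj m Q yt \<beta>"
    using dual_obj_expand[OF assms(1), of yt \<alpha> d] linear quadratic by simp
qed

lemma sign_product_bigM_iff:
  fixes \<sigma> r w C :: real
  assumes "\<sigma> = 1 \<or> \<sigma> = -1"
  shows "((- C * (1 + \<sigma>) \<le> r + w \<and> r + w \<le> C * (1 + \<sigma>))
        \<and> (- C * (1 - \<sigma>) \<le> r - w \<and> r - w \<le> C * (1 - \<sigma>)))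
     \<longleftrightarrow> r = \<sigma> * w \<and> \<bar>w\<bar> \<le> C"
  using assms by (auto simp: abs_le_iff)

lemma signed_box_bigM_iff:
  fixes \<sigma> z a C :: real
  assumes "\<sigma> = 1 \<or> \<sigma> = -1"
  shows "((- a \<le> z \<and> z \<le> a) \<and> (a - C * (1 - \<sigma>) \<le> z \<and> z \<le> C * (1 + \<sigma>) - a))
     \<longleftrightarrow> z = \<sigma> * a \<and> 0 \<le> a \<and> a \<le> C"
  using assms by auto

lemma kkt_pair_if_bigM:
  fixes a u v s \<tau> C Mu Mv :: real
  assumes "s \<in> {0,1}" "\<tau> \<in> {0,1}" "0 \<le> u" "0 \<le> v"
    and "u \<le> Mu * s" "a \<le> C * (1 - s)" "v \<le> Mv * \<tau>" "C * \<tau> \<le> a"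
  shows "(a < C \<longrightarrow> 0 \<le> u - v) \<and> (0 < a \<longrightarrow> u - v \<le> 0)"
  using assms by auto

lemma bigM_if_kkt_pair:
  fixes a g C B :: real
  assumes "0 \<le> a" "a \<le> C" "a < C \<longrightarrow> 0 \<le> g" "0 < a \<longrightarrow> g \<le> 0" "\<bar>g + 1\<bar> \<le> B"
  shows "(max g 0 \<le> (B - 1) * of_bool (0 < g) \<and> a \<le> C * (1 - of_bool (0 < g)))
       \<and> (max (- g) 0 \<le> (B + 1) * of_bool (g < 0) \<and> C * of_bool (g < 0) \<le> a)"
  using assms by (auto simp: abs_le_iff)

lemma sign_indicator_bigM:
  fixes p ph h l :: real
  assumes "\<bar>p\<bar> \<le> h" "l = - h"
  shows "(ph > 0 \<longrightarrow> p \<le> h * (1 - of_bool (sgn ph * p \<le> 0)) \<and> p \<ge> l * of_bool (sgn ph * p \<le> 0))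
       \<and> (ph < 0 \<longrightarrow> p \<ge> l * (1 - of_bool (sgn ph * p \<le> 0)) \<and> p \<le> h * of_bool (sgn ph * p \<le> 0))"
  using assms by (auto simp: abs_le_iff sgn_if)

lemma sign_indicator_if_bigM:
  fixes p ph c h l :: real
  assumes "c \<in> {0,1}"
    and "ph > 0 \<longrightarrow> p \<le> h * (1 - c) \<and> p \<ge> l * c"
    and "ph < 0 \<longrightarrow> p \<ge> l * (1 - c) \<and> p \<le> h * c"
  shows "c \<le> of_bool (sgn ph * p \<le> 0)"
  using assms by (auto simp: sgn_if)

lemma abs_sum_mult_le:
  fixes w q :: "nat \<Rightarrow> real"
  assumes "\<And>j. j < m \<Longrightarrow> \<bar>w j\<bar> \<le> C"
  shows "\<bar>\<Sum>j<m. w j * q j\<bar> \<le> C * (\<Sum>j<m. \<bar>q j\<bar>)"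
proof -
  have "\<bar>\<Sum>j<m. w j * q j\<bar> \<le> (\<Sum>j<m. \<bar>w j\<bar> * \<bar>q j\<bar>)"
    using sum_abs[of "\<lambda>j. w j * q j" "{..<m}"] by (simp add: abs_mult)
  also have "\<dots> \<le> (\<Sum>j<m. C * \<bar>q j\<bar>)"
    using assms by (intro sum_mono mult_right_mono) auto
  finally show ?thesis by (simp add: sum_distrib_left)
qed

lemma abs_dual_grad_add_one_le:
  assumes "label_vec m yt" "dual_feasible m C \<alpha>" "i < m"
  shows "\<bar>dual_grad m Q yt \<alpha> i + 1\<bar> \<le> (\<Sum>j<m. C * \<bar>Q i j\<bar>)"
proof -
  have "\<bar>yt i * yt j * \<alpha> j\<bar> \<le> C" if "j < m" for j
  proof -
    have "yt i = -1 \<or> yt i = 1" "yt j = -1 \<or> yt j = 1" "0 \<le> \<alpha> j" "\<alpha> j \<le> C"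
      using assms that by (auto simp: label_vec_def dual_feasible_def)
    then show ?thesis by (auto simp: abs_mult)
  qed
  then have "\<bar>\<Sum>j<m. (yt i * yt j * \<alpha> j) * Q i j\<bar> \<le> C * (\<Sum>j<m. \<bar>Q i j\<bar>)"
    by (rule abs_sum_mult_le)
  then show ?thesis by (simp add: dual_grad_def sum_distrib_left)
qed

lemma sum_label_disagreement:
  assumes "label_vec m y" "label_vec m yt"
  shows "(\<Sum>i<m. 1 - y i * yt i) = 2 * real (card {i\<in>{..<m}. yt i \<noteq> y i})"
proof -
  have "(\<Sum>i<m. 1 - y i * yt i) = (\<Sum>i<m. 2 * of_bool (yt i \<noteq> y i))"
  proof (intro sum.cong refl)
    fix i assume "i \<in> {..<m}"
    then have "y i = -1 \<or> y i = 1" "yt i = -1 \<or> yt i = 1"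
      using assms by (auto simp: label_vec_def)
    then show "1 - y i * yt i = 2 * of_bool (yt i \<noteq> y i)" by auto
  qed
  also have "\<dots> = 2 * real (card {i\<in>{..<m}. yt i \<noteq> y i})"
    by (subst sum_distrib_left[symmetric], subst sum_of_bool_eq) (simp_all add: Int_def)
  finally show ?thesis .
qed

lemma adv_set_iff_budget:
  assumes "label_vec m y" "0 \<le> \<epsilon>"
  shows "yt \<in> adv_set m \<epsilon> y \<longleftrightarrow>
           label_vec m yt \<and> (\<Sum>i<m. 1 - y i * yt i) \<le> 2 * of_int \<lfloor>\<epsilon> * real m\<rfloor>"
proof -
  have "0 \<le> \<lfloor>\<epsilon> * real m\<rfloor>" using assms(2) by simp
  then have "card {i\<in>{..<m}. yt i \<noteq> y i} \<le> nat \<lfloor>\<epsilon> * real m\<rfloor>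
         \<longleftrightarrow> int (card {i\<in>{..<m}. yt i \<noteq> y i}) \<le> \<lfloor>\<epsilon> * real m\<rfloor>"
    by (rule le_nat_iff)
  also have "\<dots> \<longleftrightarrow> real (card {i\<in>{..<m}. yt i \<noteq> y i}) \<le> of_int \<lfloor>\<epsilon> * real m\<rfloor>"
    by (simp only: of_int_le_iff[symmetric, where 'a = real] of_int_of_nat_eq)
  finally show ?thesis
    using sum_label_disagreement[OF assms(1)] by (auto simp: adv_set_def)
qed

lemma num_nonrobust_eq_sum:
  assumes "finite T"
  shows "real (num_nonrobust m Qt T phat yt \<alpha>)
       = (\<Sum>t\<in>T. of_bool (sgn (phat t) * pred_score m Qt yt \<alpha> t \<le> 0))"
  using assms by (simp add: num_nonrobust_def Int_def)

lemma PC_feasible_imp_certificate: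
  assumes F: "PC_feasible m C \<epsilon> Q Qt T y phat \<alpha> yt z u v y' s tv R c p"
    and "sym_mat m Q" "psd m Q" "0 \<le> \<epsilon>" "label_vec m y" "finite T"
  shows "yt \<in> adv_set m \<epsilon> y \<and> \<alpha> \<in> svm_opt m C Q yt
     \<and> (\<Sum>t\<in>T. c t) \<le> real (num_nonrobust m Qt T phat yt \<alpha>)"
proof -
  have budget: "(\<Sum>i<m. 1 - y i * yt i) \<le> 2 * of_int \<lfloor>\<epsilon> * real m\<rfloor>"
    and bits: "\<forall>i<m. y' i \<in> {0,1} \<and> s i \<in> {0,1} \<and> tv i \<in> {0,1}"
    and yt_bits: "\<forall>i<m. yt i = 2 * y' i - 1"
    and stationarity: "\<forall>i<m. (\<Sum>j<m. R i j * Q i j) - 1 - u i + v i = 0"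
    and uv: "\<forall>i<m. 0 \<le> u i \<and> 0 \<le> v i"
    and R_plus: "\<forall>i<m. \<forall>j<m. - C * (1 + yt i) \<le> R i j + z j \<and> R i j + z j \<le> C * (1 + yt i)"
    and R_minus: "\<forall>i<m. \<forall>j<m. - C * (1 - yt i) \<le> R i j - z j \<and> R i j - z j \<le> C * (1 - yt i)"
    and z_box: "\<forall>i<m. - \<alpha> i \<le> z i \<and> z i \<le> \<alpha> i"
    and z_sign: "\<forall>i<m. \<alpha> i - C * (1 - yt i) \<le> z i \<and> z i \<le> C * (1 + yt i) - \<alpha> i"
    and s_switch: "\<forall>i<m. u i \<le> ((\<Sum>j<m. C * \<bar>Q i j\<bar>) - 1) * s i \<and> \<alpha> i \<le> C * (1 - s i)"
    and tv_switch: "\<forall>i<m. v i \<le> ((\<Sum>j<m. C * \<bar>Q i j\<bar>) + 1) * tv i \<and> C * tv i \<le> \<alpha> i"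
    and c_bit: "\<forall>t\<in>T. c t \<in> {0,1}"
    and p_eq: "\<forall>t\<in>T. p t = (\<Sum>i<m. z i * Qt t i)"
    and p_pos: "\<forall>t\<in>T. phat t > 0 \<longrightarrow> p t \<le> C * (\<Sum>i<m. \<bar>Qt t i\<bar>) * (1 - c t)
                                     \<and> p t \<ge> - C * (\<Sum>i<m. \<bar>Qt t i\<bar>) * c t"
    and p_neg: "\<forall>t\<in>T. phat t < 0 \<longrightarrow> p t \<ge> - C * (\<Sum>i<m. \<bar>Qt t i\<bar>) * (1 - c t)
                                     \<and> p t \<le> C * (\<Sum>i<m. \<bar>Qt t i\<bar>) * c t"
    using F unfolding PC_feasible_def Let_def by auto
  have sign: "yt i = 1 \<or> yt i = -1" if "i < m" for i using bits yt_bits that by auto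
  have z_eq: "z i = yt i * \<alpha> i" and \<alpha>_bounds: "0 \<le> \<alpha> i" "\<alpha> i \<le> C" if "i < m" for i
    using signed_box_bigM_iff[OF sign[OF that]] z_box z_sign that by blast+
  have R_eq: "R i j = yt i * z j" if "i < m" "j < m" for i j
    using sign_product_bigM_iff[OF sign[OF that(1)]] R_plus R_minus that by blast
  have "dual_grad m Q yt \<alpha> i = u i - v i" if "i < m" for i
  proof -
    have "(\<Sum>j<m. R i j * Q i j) = (\<Sum>j<m. yt i * yt j * \<alpha> j * Q i j)"
      using that by (intro sum.cong refl) (simp add: R_eq z_eq)
    then show ?thesis
      using stationarity[rule_format, OF that] unfolding dual_grad_def by linarith
  qed
  moreover have "(\<alpha> i < C \<longrightarrow> 0 \<le> u i - v i) \<and> (0 < \<alpha> i \<longrightarrow> u i - v i \<le> 0)" if "i < m" for i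
    using bits uv s_switch tv_switch that
    by (intro kkt_pair_if_bigM[where s = "s i" and \<tau> = "tv i"]) auto
  ultimately have "svm_kkt m C Q yt \<alpha>" by (simp add: svm_kkt_def)
  then have opt: "\<alpha> \<in> svm_opt m C Q yt"
    using svm_opt_if_kkt assms(2,3) \<alpha>_bounds by (simp add: dual_feasible_def)
  have adv: "yt \<in> adv_set m \<epsilon> y"
    using adv_set_iff_budget[OF assms(5,4)] budget sign by (auto simp: label_vec_def)
  have "c t \<le> of_bool (sgn (phat t) * pred_score m Qt yt \<alpha> t \<le> 0)" if "t \<in> T" for t
  proof -
    have "pred_score m Qt yt \<alpha> t = p t"
      using p_eq that by (simp add: pred_score_def z_eq)
    moreover have "c t \<le> of_bool (sgn (phat t) * p t \<le> 0)"
      using bspec[OF c_bit that] bspec[OF p_pos that] bspec[OF p_neg that]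
      by (rule sign_indicator_if_bigM)
    ultimately show ?thesis by simp
  qed
  then have "(\<Sum>t\<in>T. c t) \<le> real (num_nonrobust m Qt T phat yt \<alpha>)"
    unfolding num_nonrobust_eq_sum[OF assms(6)] by (rule sum_mono)
  with adv opt show ?thesis by blast
qed

lemma num_nonrobust_in_PC_values:
  assumes "yt \<in> adv_set m \<epsilon> y" "\<alpha> \<in> svm_opt m C Q yt"
    and "sym_mat m Q" "0 \<le> \<epsilon>" "label_vec m y" "finite T"
  shows "real (num_nonrobust m Qt T phat yt \<alpha>) \<in> PC_values m C \<epsilon> Q Qt T y phat"
proof -
  define g where "g = dual_grad m Q yt \<alpha>"
  define z where "z i = yt i * \<alpha> i" for i
  define R where "R i j = yt i * z j" for i j
  define u where "u i = max (g i) 0" for i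
  define v where "v i = max (- g i) 0" for i
  define s where "s i = (of_bool (0 < g i) :: real)" for i
  define tv where "tv i = (of_bool (g i < 0) :: real)" for i
  define p where "p t = (\<Sum>i<m. z i * Qt t i)" for t
  define c where "c t = (of_bool (sgn (phat t) * p t \<le> 0) :: real)" for t
  have budget: "label_vec m yt \<and> (\<Sum>i<m. 1 - y i * yt i) \<le> 2 * of_int \<lfloor>\<epsilon> * real m\<rfloor>"
    using adv_set_iff_budget[OF assms(5,4)] assms(1) by simp
  then have sign: "yt i = 1 \<or> yt i = -1" if "i < m" for i
    using that by (auto simp: label_vec_def)
  have \<alpha>_bounds: "0 \<le> \<alpha> i \<and> \<alpha> i \<le> C" if "i < m" for i
    using assms(2) that by (simp add: svm_opt_def dual_feasible_def)
  have z_abs: "\<bar>z i\<bar> \<le> C" if "i < m" for i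
    using sign[OF that] \<alpha>_bounds[OF that] by (auto simp: z_def)
  have p_abs: "\<bar>p t\<bar> \<le> C * (\<Sum>i<m. \<bar>Qt t i\<bar>)" for t
    using abs_sum_mult_le[of m z C "Qt t"] z_abs by (simp add: p_def)
  have bits: "\<forall>i<m. (yt i + 1) / 2 \<in> {0,1} \<and> s i \<in> {0,1} \<and> tv i \<in> {0,1}"
  proof (intro allI impI)
    fix i assume "i < m"
    with sign[OF \<open>i < m\<close>] show "(yt i + 1) / 2 \<in> {0,1} \<and> s i \<in> {0,1} \<and> tv i \<in> {0,1}"
      by (auto simp: s_def tv_def)
  qed
  have stationarity: "\<forall>i<m. (\<Sum>j<m. R i j * Q i j) - 1 - u i + v i = 0"
  proof (intro allI impI)
    fix i
    have "(\<Sum>j<m. R i j * Q i j) - 1 = g i"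
      by (simp add: R_def z_def g_def dual_grad_def algebra_simps)
    then show "(\<Sum>j<m. R i j * Q i j) - 1 - u i + v i = 0" by (simp add: u_def v_def max_def)
  qed
  have R_bigM: "(- C * (1 + yt i) \<le> R i j + z j \<and> R i j + z j \<le> C * (1 + yt i))
      \<and> (- C * (1 - yt i) \<le> R i j - z j \<and> R i j - z j \<le> C * (1 - yt i))" if "i < m" "j < m" for i j
    using sign_product_bigM_iff[OF sign[OF that(1)]] z_abs[OF that(2)] by (simp add: R_def)
  have z_bigM: "(- \<alpha> i \<le> z i \<and> z i \<le> \<alpha> i)
      \<and> (\<alpha> i - C * (1 - yt i) \<le> z i \<and> z i \<le> C * (1 + yt i) - \<alpha> i)" if "i < m" for i
    using signed_box_bigM_iff[OF sign[OF that]] \<alpha>_bounds[OF that] by (simp add: z_def)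
  have switch_bigM: "(u i \<le> ((\<Sum>j<m. C * \<bar>Q i j\<bar>) - 1) * s i \<and> \<alpha> i \<le> C * (1 - s i))
      \<and> (v i \<le> ((\<Sum>j<m. C * \<bar>Q i j\<bar>) + 1) * tv i \<and> C * tv i \<le> \<alpha> i)" if "i < m" for i
    unfolding u_def v_def s_def tv_def
  proof (rule bigM_if_kkt_pair)
    show "\<bar>g i + 1\<bar> \<le> (\<Sum>j<m. C * \<bar>Q i j\<bar>)"
      using abs_dual_grad_add_one_le budget assms(2) that by (simp add: g_def svm_opt_def)
  qed (use \<alpha>_bounds[OF that] svm_opt_imp_kkt[OF assms(3,2)] that in \<open>auto simp: svm_kkt_def g_def\<close>)
  have c_bigM:
    "(phat t > 0 \<longrightarrow> p t \<le> C * (\<Sum>i<m. \<bar>Qt t i\<bar>) * (1 - c t)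
                     \<and> p t \<ge> - C * (\<Sum>i<m. \<bar>Qt t i\<bar>) * c t)
   \<and> (phat t < 0 \<longrightarrow> p t \<ge> - C * (\<Sum>i<m. \<bar>Qt t i\<bar>) * (1 - c t)
                     \<and> p t \<le> C * (\<Sum>i<m. \<bar>Qt t i\<bar>) * c t)" for t
    unfolding c_def by (rule sign_indicator_bigM[OF p_abs]) simp
  have "PC_feasible m C \<epsilon> Q Qt T y phat \<alpha> yt z u v (\<lambda>i. (yt i + 1) / 2) s tv R c p"
    unfolding PC_feasible_def Let_def
  proof (intro conjI)
    show "\<forall>i<m. 0 \<le> u i \<and> 0 \<le> v i" by (simp add: u_def v_def)
    show "\<forall>t\<in>T. c t \<in> {0,1}" by (simp add: c_def)
    show "\<forall>i<m. yt i = 2 * ((yt i + 1) / 2) - 1" by (simp add: field_simps)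
  qed (use budget bits stationarity R_bigM z_bigM switch_bigM c_bigM in \<open>simp_all add: p_def\<close>)
  moreover have "real (num_nonrobust m Qt T phat yt \<alpha>) = (\<Sum>t\<in>T. c t)"
    unfolding num_nonrobust_eq_sum[OF assms(6)] c_def p_def z_def pred_score_def
    by (simp add: algebra_simps)
  ultimately show ?thesis unfolding PC_values_def by blast
qed

lemma is_opt_value_Max:
  assumes "finite S" "S \<noteq> {}" "\<And>n. n \<in> S \<Longrightarrow> real n \<in> V" "\<And>w. w \<in> V \<Longrightarrow> \<exists>n\<in>S. w \<le> real n"
  shows "is_opt_value V (real (Max S))"
proof -
  have "w \<le> real (Max S)" if "w \<in> V" for w
    using assms(4)[OF that] Max_ge[OF assms(1)] by force
  then show ?thesis
    using assms(3) Max_in[OF assms(1,2)] by (simp add: is_opt_value_def)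
qed

theorem theorem2:
  fixes m :: nat and C \<epsilon> :: real
    and y :: "nat \<Rightarrow> real" and Q :: "nat \<Rightarrow> nat \<Rightarrow> real"
    and T :: "'a set" and Qt :: "'a \<Rightarrow> nat \<Rightarrow> real"
    and \<alpha>s :: "nat \<Rightarrow> real"
  assumes "m \<ge> 1" and "C > 0" and "0 \<le> \<epsilon>" and "\<epsilon> \<le> 1"
    and "label_vec m y"
    and "sym_mat m Q" and "psd m Q"
    and "finite T"
    and "\<alpha>s \<in> svm_opt m C Q y"
    and "\<forall>t\<in>T. pred_score m Qt y \<alpha>s t \<noteq> 0"
  shows "is_opt_value (PC_values m C \<epsilon> Q Qt T y (pred_score m Qt y \<alpha>s))
           (real (Max {num_nonrobust m Qt T (pred_score m Qt y \<alpha>s) yt \<alpha> |yt \<alpha>.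
                         yt \<in> adv_set m \<epsilon> y \<and> \<alpha> \<in> svm_opt m C Q yt}))"
proof (rule is_opt_value_Max)
  let ?S = "{num_nonrobust m Qt T (pred_score m Qt y \<alpha>s) yt \<alpha> |yt \<alpha>.
               yt \<in> adv_set m \<epsilon> y \<and> \<alpha> \<in> svm_opt m C Q yt}"
  have "?S \<subseteq> {..card T}"
    using assms(8) by (auto simp: num_nonrobust_def intro: card_mono)
  then show "finite ?S" by (rule finite_subset) simp
  have "y \<in> adv_set m \<epsilon> y" using assms(5) by (simp add: adv_set_def)
  with assms(9) show "?S \<noteq> {}" by blast
  show "real n \<in> PC_values m C \<epsilon> Q Qt T y (pred_score m Qt y \<alpha>s)" if "n \<in> ?S" for n
    using that num_nonrobust_in_PC_values assms(3,5,6,8) by blast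
  show "\<exists>n\<in>?S. w \<le> real n" if "w \<in> PC_values m C \<epsilon> Q Qt T y (pred_score m Qt y \<alpha>s)" for w
    using that PC_feasible_imp_certificate[OF _ assms(6,7,3,5,8)]
    unfolding PC_values_def by blast
qed

end
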